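(* Let $d\in\mathbb{N}$, $c>0$, $\gamma>0$, and for $t>0$ and $\mathbf{x}\in\mathbb{R}^d$ with $\|\mathbf{x}\|<ct$ define $$p(\mathbf{x},t)=\frac{\Gamma(\gamma+\frac d2)}{\pi^{d/2}\Gamma(\gamma)}\,\frac{1}{(ct)^{d-2+2\gamma}}\left(c^2t^2-\|\mathbf{x}\|^2\right)^{\gamma-1}.$$ Then for each $t>0$, $p(\cdot,t)$ is a probability density on the open ball $\{\|\mathbf{x}\|<ct\}$, and $p$ satisfies the Euler–Poisson–Darboux equation $$\left(\frac{\partial^2}{\partial t^2}+\frac{d+2\gamma-1}{t}\frac{\partial}{\partial t}\right)p(\mathbf{x},t)=c^2\sum_{j=1}^d\frac{\partial^2}{\partial x_j^2}p(\mathbf{x},t),\qquad t>0,\ \|\mathbf{x}\|<ct.$$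
   Context: $\|\cdot\|$ is the Euclidean norm on $\mathbb{R}^d$. *)

theory Defs
  imports "HOL-Analysis.Analysis"
begin

text \<open>The density p(x,t) on R^d, d = CARD('n), extended by 0 outside the open ball
  of radius c t (only its values on the ball matter).\<close>
definition epd_density :: "real \<Rightarrow> real \<Rightarrow> real ^ 'n \<Rightarrow> real \<Rightarrow> real" where
  "epd_density c \<gamma> x t =
     (if t > 0 \<and> norm x < c * t then
        Gamma (\<gamma> + real CARD('n) / 2) / (pi powr (real CARD('n) / 2) * Gamma \<gamma>)
        * (1 / (c * t) powr (real CARD('n) - 2 + 2 * \<gamma>))
        * (c\<^sup>2 * t\<^sup>2 - (norm x)\<^sup>2) powr (\<gamma> - 1)
      else 0)"

end

theory Submission
  imports Defs
begin

text \<open>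
  The Euler-Poisson-Darboux density on the cone |x| < c t in R^d is
      p(x,t) = K (c t)^(-a) (c^2 t^2 - |x|^2)^b,   a = d - 2 + 2 gamma,  b = gamma - 1,
  with K = Gamma(gamma + d/2) / (pi^(d/2) Gamma(gamma)).

  Pushing Lebesgue measure on a ball B_R of any Euclidean space forward along
  x |-> (|x|/R)^2 gives the measure with density vol(B_R) (d/2) u^(d/2-1) on [0,1]; both sides
  are determined by volumes of balls.  Hence the integral of (R^2 - |x|^2)^(gamma-1) over B_R
  is a Beta integral, equal to pi^(d/2) Gamma(gamma)/Gamma(gamma+d/2) R^a, which is the
  reciprocal of the factor in front of p(-,t) for R = c t.

  In the open cone p is a product of powers, so its first and second
  derivatives in t and along each coordinate axis are computed explicitly, each in the form
  p * (rational expression).  Summing the axis derivatives gives the Laplacian, and the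
  Euler-Poisson-Darboux equation reduces to an identity of rational functions which holds
  because a = d + 2 b.
\<close>

lemma has_integral_powr_deriv:
  fixes e a b :: real
  assumes "e > 0" "0 \<le> a" "a \<le> b"
  shows "((\<lambda>v. e * v powr (e - 1)) has_integral (b powr e - a powr e)) {a..b}"
proof (rule fundamental_theorem_of_calculus_interior[OF assms(3)])
  show "continuous_on {a..b} (\<lambda>v. v powr e)"
    using assms by (intro continuous_on_powr') (auto intro: continuous_intros)
  fix x assume "x \<in> {a<..<b}"
  hence "x > 0" using assms by auto
  thus "((\<lambda>v. v powr e) has_vector_derivative e * x powr (e - 1)) (at x)"
    using has_real_derivative_powr[of x e] by (simp add: has_real_derivative_iff_has_vector_derivative)
qed

lemma nn_integral_powr_deriv:
  fixes K e a :: real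
  assumes "e > 0" "0 \<le> a" "a \<le> 1" "K \<ge> 0"
  shows "(\<integral>\<^sup>+u. ennreal (K * (e * u powr (e - 1))) * indicator {a..1} u \<partial>lborel)
       = ennreal (K * (1 - a powr e))"
proof -
  have "((\<lambda>u. K * (e * u powr (e - 1))) has_integral K * (1 powr e - a powr e)) {a..1}"
    using has_integral_powr_deriv[OF assms(1-3)] by (rule has_integral_mult_right)
  thus ?thesis
    using nn_integral_has_integral_lebesgue'[of "{a..1}" "\<lambda>u. K * (e * u powr (e - 1))"] assms
    by simp
qed

lemma sqrt_power_eq_powr: "0 \<le> (u::real) \<Longrightarrow> n > 0 \<Longrightarrow> sqrt u ^ n = u powr (real n / 2)"
proof (cases "u = 0")
  case False
  assume "0 \<le> u"
  hence "sqrt u = u powr (1/2)" by (simp add: powr_half_sqrt)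
  thus ?thesis using False by (simp add: powr_power)
qed simp

lemma ball_radial_superlevel:
  fixes R u :: real
  assumes R: "R > 0" and u: "0 \<le> u"
  shows "ball 0 R \<inter> (\<lambda>x::'a::real_normed_vector. (norm x / R)\<^sup>2) -` {u<..} = ball 0 R - cball 0 (R * sqrt u)"
proof -
  have "u < (norm x / R)\<^sup>2 \<longleftrightarrow> R * sqrt u < norm x" for x :: 'a
  proof -
    have "u < (norm x / R)\<^sup>2 \<longleftrightarrow> sqrt u < norm x / R"
      using u R by (metis norm_ge_zero real_less_lsqrt real_less_rsqrt real_sqrt_abs
          real_sqrt_less_iff zero_le_divide_iff less_imp_le abs_of_nonneg)
    also have "\<dots> \<longleftrightarrow> R * sqrt u < norm x" using R by (simp add: field_simps)
    finally show ?thesis .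
  qed
  thus ?thesis by (auto simp: dist_norm)
qed

lemma emeasure_ball_radial_superlevel:
  fixes R u :: real
  assumes R: "R > 0"
  defines "d \<equiv> real DIM('a::euclidean_space)"
  shows "emeasure lborel (ball 0 R \<inter> (\<lambda>x::'a. (norm x / R)\<^sup>2) -` {u<..})
       = ennreal (unit_ball_vol d * R ^ DIM('a) * (1 - min 1 (max 0 u) powr (d/2)))"
proof -
  consider "u < 0" | "0 \<le> u" "u < 1" | "1 \<le> u" by linarith
  then show ?thesis
  proof cases
    case 1
    hence "ball 0 R \<inter> (\<lambda>x::'a. (norm x / R)\<^sup>2) -` {u<..} = ball 0 R"
      by (auto, smt (verit) zero_le_power2)
    thus ?thesis using 1 R by (simp add: emeasure_ball d_def)
  next
    case 2
    have "R * sqrt u < R" using R 2 by (simp add: mult_less_cancel_left1)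
    hence sub: "cball (0::'a) (R * sqrt u) \<subseteq> ball 0 R" by auto
    have "emeasure lborel (ball 0 R \<inter> (\<lambda>x::'a. (norm x / R)\<^sup>2) -` {u<..})
        = emeasure lborel (ball (0::'a) R) - emeasure lborel (cball (0::'a) (R * sqrt u))"
      unfolding ball_radial_superlevel[OF R 2(1)]
      using R 2 sub by (intro emeasure_Diff) (auto simp: emeasure_cball)
    also have "\<dots> = ennreal (unit_ball_vol d * R ^ DIM('a) * (1 - u powr (d/2)))"
      using R 2 by (simp add: emeasure_ball emeasure_cball ennreal_minus d_def
          power_mult_distrib sqrt_power_eq_powr algebra_simps)
    finally show ?thesis using 2 by simp
  next
    case 3
    have "(norm x / R)\<^sup>2 < 1" if "norm x < R" for x :: 'a
      using that R by (simp add: abs_square_less_1)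
    hence "ball 0 R \<inter> (\<lambda>x::'a. (norm x / R)\<^sup>2) -` {u<..} = {}"
      using 3 by fastforce
    thus ?thesis using 3 by simp
  qed
qed

lemma emeasure_powr_density_superlevel:
  fixes K e u :: real
  assumes e: "e > 0" and K: "K \<ge> 0"
  shows "emeasure (density lborel (\<lambda>v. ennreal (indicator {0..1} v * (K * (e * v powr (e - 1)))))) {u<..}
       = ennreal (K * (1 - min 1 (max 0 u) powr e))"
proof -
  define a where "a = min 1 (max 0 u)"
  have a: "0 \<le> a" "a \<le> 1" by (auto simp: a_def)
  have "emeasure (density lborel (\<lambda>v. ennreal (indicator {0..1} v * (K * (e * v powr (e - 1)))))) {u<..}
      = (\<integral>\<^sup>+v. ennreal (K * (e * v powr (e - 1))) * indicator ({0..1} \<inter> {u<..}) v \<partial>lborel)"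
    by (subst emeasure_density) (auto intro!: nn_integral_cong simp: indicator_def)
  also have "\<dots> = (\<integral>\<^sup>+v. ennreal (K * (e * v powr (e - 1))) * indicator {a..1} v \<partial>lborel)"
    by (intro nn_integral_cong_AE eventually_mono[OF AE_lborel_singleton[of a]])
       (auto simp: indicator_def a_def)
  also have "\<dots> = ennreal (K * (1 - a powr e))"
    by (rule nn_integral_powr_deriv[OF e a K])
  finally show ?thesis by (simp add: a_def)
qed

text \<open>Pushforward of Lebesgue measure on B_R under x \<mapsto> (|x|/R)^2: it has density
  vol(B_R) (d/2) u^{d/2-1} on [0,1], since both finite measures agree on every half-line (u,\<infinity>).\<close>
lemma radial_distr_ball:
  fixes R :: real
  assumes R: "R > 0"
  defines "d \<equiv> real DIM('a::euclidean_space)"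
  defines "K \<equiv> unit_ball_vol d * R ^ DIM('a)"
  shows "distr (density lborel (indicator (ball (0::'a) R))) borel (\<lambda>x. (norm x / R)\<^sup>2)
       = density lborel (\<lambda>u. ennreal (indicator {0..1} u * (K * ((d/2) * u powr (d/2 - 1)))))"
    (is "?M = ?N")
proof (rule measure_eqI_lessThan)
  show "sets ?M = sets borel" "sets ?N = sets borel" by auto
  have M: "emeasure ?M {u<..} = emeasure lborel (ball 0 R \<inter> (\<lambda>x::'a. (norm x / R)\<^sup>2) -` {u<..})" for u
  proof -
    have "(\<lambda>x::'a. (norm x / R)\<^sup>2) -` {u<..} \<in> sets lborel"
      using measurable_sets_borel[of "\<lambda>x::'a. (norm x / R)\<^sup>2" borel "{u<..}"] by auto
    thus ?thesis by (subst emeasure_distr) (auto intro!: emeasure_restricted)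
  qed
  show "emeasure ?M {u<..} < \<infinity>" for u
  proof -
    have "emeasure ?M {u<..} \<le> emeasure lborel (ball (0::'a) R)"
      unfolding M by (intro emeasure_mono) auto
    also have "\<dots> < \<infinity>" using R by (simp add: emeasure_ball)
    finally show ?thesis .
  qed
  have "d/2 > 0" "K \<ge> 0" using R by (simp_all add: K_def d_def)
  then show "emeasure ?M {u<..} = emeasure ?N {u<..}" for u
    unfolding M emeasure_ball_radial_superlevel[OF R] emeasure_powr_density_superlevel[OF \<open>d/2 > 0\<close> \<open>K \<ge> 0\<close>]
    by (simp add: K_def d_def)
qed

lemma nn_integral_radial_ball:
  fixes R :: real and h :: "real \<Rightarrow> real"
  assumes R: "R > 0" and h: "h \<in> borel_measurable borel"
  defines "d \<equiv> real DIM('a::euclidean_space)"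
  defines "K \<equiv> unit_ball_vol d * R ^ DIM('a)"
  shows "(\<integral>\<^sup>+x. indicator (ball (0::'a) R) x * ennreal (h ((norm x / R)\<^sup>2)) \<partial>lborel)
       = (\<integral>\<^sup>+u. ennreal (K * (d/2) * (u powr (d/2 - 1) * h u)) * indicator {0..1} u \<partial>lborel)"
proof -
  have K: "K \<ge> 0" using R by (simp add: K_def d_def)
  have "(\<integral>\<^sup>+x. indicator (ball (0::'a) R) x * ennreal (h ((norm x / R)\<^sup>2)) \<partial>lborel)
      = (\<integral>\<^sup>+x. ennreal (h ((norm x / R)\<^sup>2)) \<partial>density lborel (indicator (ball (0::'a) R)))"
    using h by (subst nn_integral_density) (auto intro: borel_measurable_indicator)
  also have "\<dots> = (\<integral>\<^sup>+u. ennreal (h u) \<partial>distr (density lborel (indicator (ball (0::'a) R))) borel (\<lambda>x. (norm x / R)\<^sup>2))"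
    using h by (subst nn_integral_distr) auto
  also have "\<dots> = (\<integral>\<^sup>+u. ennreal (indicator {0..1} u * (K * ((d/2) * u powr (d/2 - 1)))) * ennreal (h u) \<partial>lborel)"
    unfolding radial_distr_ball[OF R] K_def d_def using h by (subst nn_integral_density) auto
  also have "\<dots> = (\<integral>\<^sup>+u. ennreal (K * (d/2) * (u powr (d/2 - 1) * h u)) * indicator {0..1} u \<partial>lborel)"
  proof (intro nn_integral_cong)
    fix u :: real
    have "K * (d/2) * u powr (d/2 - 1) \<ge> 0" using K by (simp add: d_def)
    hence "ennreal (K * ((d/2) * u powr (d/2 - 1))) * ennreal (h u) = ennreal (K * (d/2) * (u powr (d/2 - 1) * h u))"
      using ennreal_mult'[of "K * (d/2) * u powr (d/2 - 1)" "h u"] by (simp add: mult_ac)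
    thus "ennreal (indicator {0..1} u * (K * ((d/2) * u powr (d/2 - 1)))) * ennreal (h u)
        = ennreal (K * (d/2) * (u powr (d/2 - 1) * h u)) * indicator {0..1} u"
      by (simp add: indicator_def)
  qed
  finally show ?thesis .
qed

lemma unit_ball_vol_Beta:
  fixes d \<gamma> :: real
  assumes d: "d > 0" and g: "\<gamma> > 0"
  shows "unit_ball_vol d * (d/2) * Beta (d/2) \<gamma> = pi powr (d/2) * Gamma \<gamma> / Gamma (\<gamma> + d/2)"
proof -
  have "d/2 \<notin> \<int>\<^sub>\<le>\<^sub>0" using d nonpos_Ints_nonpos by fastforce
  hence "Gamma (d/2 + 1) = (d/2) * Gamma (d/2)" using Gamma_plus1[of "d/2"] by simp
  moreover have "Gamma (d/2) \<noteq> 0" "Gamma (d/2 + \<gamma>) > 0"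
    using d g by (simp_all add: Gamma_real_pos less_imp_neq[symmetric])
  ultimately show ?thesis
    using d unfolding unit_ball_vol_def Beta_def by (simp add: field_simps add.commute)
qed

text \<open>The key integral in Lebesgue form: after the radial reduction it is a Beta integral.\<close>
lemma nn_integral_ball_powr:
  fixes R \<gamma> :: real
  assumes R: "R > 0" and g: "\<gamma> > 0"
  defines "d \<equiv> real DIM('a::euclidean_space)"
  shows "(\<integral>\<^sup>+x. ennreal (indicator (ball (0::'a) R) x * (R\<^sup>2 - (norm x)\<^sup>2) powr (\<gamma> - 1)) \<partial>lborel)
       = ennreal (unit_ball_vol d * (d/2) * Beta (d/2) \<gamma> * R powr (d - 2 + 2 * \<gamma>))"
proof -
  define K where "K = unit_ball_vol d * R ^ DIM('a)"
  define h where "h u = R powr (2 * \<gamma> - 2) * (1 - u) powr (\<gamma> - 1)" for u :: real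
  have d: "d > 0" by (simp add: d_def)
  have K: "K \<ge> 0" using R by (simp add: K_def d_def)
  have f_eq: "indicator (ball 0 R) x * (R\<^sup>2 - (norm x)\<^sup>2) powr (\<gamma> - 1)
        = indicator (ball 0 R) x * h ((norm x / R)\<^sup>2)" for x :: 'a
  proof -
    have "R\<^sup>2 - (norm x)\<^sup>2 = R\<^sup>2 * (1 - (norm x / R)\<^sup>2)" using R by (simp add: field_simps)
    hence "(R\<^sup>2 - (norm x)\<^sup>2) powr (\<gamma> - 1) = (R powr 2) powr (\<gamma> - 1) * (1 - (norm x / R)\<^sup>2) powr (\<gamma> - 1)"
      using R by (simp add: powr_mult powr_realpow)
    thus ?thesis by (simp add: h_def powr_powr algebra_simps)
  qed
  have "(\<integral>\<^sup>+x. ennreal (indicator (ball (0::'a) R) x * (R\<^sup>2 - (norm x)\<^sup>2) powr (\<gamma> - 1)) \<partial>lborel)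
      = (\<integral>\<^sup>+x. indicator (ball (0::'a) R) x * ennreal (h ((norm x / R)\<^sup>2)) \<partial>lborel)"
    unfolding f_eq by (intro nn_integral_cong) (simp add: indicator_def)
  also have "\<dots> = (\<integral>\<^sup>+u. ennreal (K * (d/2) * (u powr (d/2 - 1) * h u)) * indicator {0..1} u \<partial>lborel)"
    unfolding K_def d_def by (rule nn_integral_radial_ball[OF R]) (simp add: h_def)
  also have "\<dots> = (\<integral>\<^sup>+u. ennreal ((K * (d/2) * R powr (2 * \<gamma> - 2))
                    * (u powr (d/2 - 1) * (1 - u) powr (\<gamma> - 1))) * indicator {0..1} u \<partial>lborel)"
    by (simp add: h_def mult_ac)
  also have "\<dots> = ennreal (K * (d/2) * R powr (2 * \<gamma> - 2) * Beta (d/2) \<gamma>)"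
    by (intro nn_integral_has_integral_lebesgue' has_integral_mult_right has_integral_Beta_real)
       (use K d g in auto)
  also have "K * (d/2) * R powr (2 * \<gamma> - 2) * Beta (d/2) \<gamma>
      = unit_ball_vol d * (d/2) * Beta (d/2) \<gamma> * (R ^ DIM('a) * R powr (2 * \<gamma> - 2))"
    unfolding K_def by (simp only: mult_ac)
  also have "R ^ DIM('a) * R powr (2 * \<gamma> - 2) = R powr (d - 2 + 2 * \<gamma>)"
    using R by (simp add: d_def powr_realpow[symmetric] powr_add[symmetric] algebra_simps)
  finally show ?thesis .
qed

lemma has_integral_ball_powr:
  fixes R \<gamma> :: real
  assumes R: "R > 0" and g: "\<gamma> > 0"
  defines "d \<equiv> real DIM('a::euclidean_space)"
  shows "((\<lambda>x::'a. (R\<^sup>2 - (norm x)\<^sup>2) powr (\<gamma> - 1)) has_integral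
           pi powr (d/2) * Gamma \<gamma> / Gamma (\<gamma> + d/2) * R powr (d - 2 + 2 * \<gamma>)) (ball 0 R)"
proof -
  have d: "d > 0" by (simp add: d_def)
  define V where "V = pi powr (d/2) * Gamma \<gamma> / Gamma (\<gamma> + d/2) * R powr (d - 2 + 2 * \<gamma>)"
  have V: "V \<ge> 0" unfolding V_def using d g by (auto intro!: Gamma_real_pos)
  have "((\<lambda>x::'a. indicator (ball 0 R) x * (R\<^sup>2 - (norm x)\<^sup>2) powr (\<gamma> - 1)) has_integral V) UNIV"
  proof (rule nn_integral_has_integral)
    show "(\<lambda>x::'a. indicator (ball 0 R) x * (R\<^sup>2 - (norm x)\<^sup>2) powr (\<gamma> - 1)) \<in> borel_measurable borel"
      by (intro borel_measurable_times borel_measurable_indicator) auto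
    show "(\<integral>\<^sup>+x. ennreal (indicator (ball (0::'a) R) x * (R\<^sup>2 - (norm x)\<^sup>2) powr (\<gamma> - 1)) \<partial>lborel) = ennreal V"
      using nn_integral_ball_powr[OF R g, where 'a='a] unfolding V_def d_def unit_ball_vol_Beta[OF d g, unfolded d_def] .
  qed (use V in auto)
  moreover have "(\<lambda>x::'a. indicator (ball 0 R) x * (R\<^sup>2 - (norm x)\<^sup>2) powr (\<gamma> - 1))
      = (\<lambda>x. if x \<in> ball 0 R then (R\<^sup>2 - (norm x)\<^sup>2) powr (\<gamma> - 1) else 0)"
    by (auto simp: indicator_def)
  ultimately show ?thesis
    unfolding V_def by (subst has_integral_restrict_UNIV[symmetric]) simp
qed

definition epd_const :: "real \<Rightarrow> real \<Rightarrow> real" where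
  "epd_const d \<gamma> = Gamma (\<gamma> + d/2) / (pi powr (d/2) * Gamma \<gamma>)"

lemma epd_const_pos: "d > 0 \<Longrightarrow> \<gamma> > 0 \<Longrightarrow> epd_const d \<gamma> > 0"
  unfolding epd_const_def by (intro divide_pos_pos mult_pos_pos Gamma_real_pos) auto

lemma epd_density_cone:
  fixes x :: "real ^ 'n" and c \<gamma> t :: real
  assumes "t > 0" "norm x < c * t"
  shows "epd_density c \<gamma> x t = epd_const (real CARD('n)) \<gamma> * (1 / (c * t) powr (real CARD('n) - 2 + 2 * \<gamma>))
                                 * (c\<^sup>2 * t\<^sup>2 - (norm x)\<^sup>2) powr (\<gamma> - 1)"
  using assms by (simp add: epd_density_def epd_const_def)

lemma epd_density_nonneg:
  fixes x :: "real ^ 'n" and c \<gamma> t :: real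
  assumes "\<gamma> > 0"
  shows "epd_density c \<gamma> x t \<ge> 0"
proof (cases "t > 0 \<and> norm x < c * t")
  case True
  thus ?thesis using epd_const_pos[OF _ assms, of "real CARD('n)"] by (simp add: epd_density_cone)
qed (auto simp: epd_density_def)

text \<open>Normalisation: for every t > 0, p(\<cdot>,t) integrates to 1 over the ball of radius c t,
  because K_{d,\<gamma>} (c t)^{-(d-2+2\<gamma>)} is the reciprocal of the key integral.\<close>
lemma epd_density_integral:
  fixes c \<gamma> t :: real
  assumes c: "c > 0" and g: "\<gamma> > 0" and t: "t > 0"
  shows "((\<lambda>x::real ^ 'n. epd_density c \<gamma> x t) has_integral 1) (ball 0 (c * t))"
proof -
  define d where "d = real CARD('n)"
  define e where "e = d - 2 + 2 * \<gamma>"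
  define R where "R = c * t"
  have R: "R > 0" using c t by (simp add: R_def)
  have d: "d > 0" by (simp add: d_def)
  have "((\<lambda>x::real ^ 'n. epd_const d \<gamma> * (1 / R powr e) * (R\<^sup>2 - (norm x)\<^sup>2) powr (\<gamma> - 1))
        has_integral epd_const d \<gamma> * (1 / R powr e)
           * (pi powr (d/2) * Gamma \<gamma> / Gamma (\<gamma> + d/2) * R powr e)) (ball 0 R)"
    using has_integral_ball_powr[OF R g, where 'a="real ^ 'n"]
    unfolding d_def e_def by (intro has_integral_mult_right) simp
  also have "epd_const d \<gamma> * (1 / R powr e) * (pi powr (d/2) * Gamma \<gamma> / Gamma (\<gamma> + d/2) * R powr e) = 1"
  proof -
    have "Gamma \<gamma> \<noteq> 0" "Gamma (\<gamma> + d/2) \<noteq> 0"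
      using d g by (simp_all add: Gamma_real_pos less_imp_neq[symmetric])
    thus ?thesis using R by (simp add: epd_const_def field_simps)
  qed
  finally show ?thesis
    unfolding R_def by (rule has_integral_eq[rotated])
       (simp add: d_def e_def epd_density_cone[OF t] power_mult_distrib)
qed

lemma deriv2_from_local_derivative:
  fixes f g :: "real \<Rightarrow> real"
  assumes S: "open S" "t \<in> S"
    and f': "\<forall>s\<in>S. (f has_real_derivative g s) (at s)"
    and g': "(g has_real_derivative D2) (at t)"
  shows "f differentiable (at t)" "deriv f t = g t"
    and "deriv f differentiable (at t)" "deriv (deriv f) t = D2"
proof -
  have f't: "(f has_real_derivative g t) (at t)" using f' S(2) by blast
  show "f differentiable (at t)" using f't real_differentiable_def by blast
  show "deriv f t = g t" using f't by (rule DERIV_imp_deriv)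
  have "(deriv f has_real_derivative D2) (at t)"
    using g' S by (rule has_field_derivative_transform_within_open) (use f' DERIV_imp_deriv in metis)
  thus "deriv f differentiable (at t)" "deriv (deriv f) t = D2"
    using real_differentiable_def DERIV_imp_deriv by blast+
qed

lemma cone_gap_pos:
  fixes x :: "'a::real_normed_vector" and c t :: real
  assumes "norm x < c * t"
  shows "c\<^sup>2 * t\<^sup>2 - (norm x)\<^sup>2 > 0"
proof -
  have "(norm x)\<^sup>2 < (c * t)\<^sup>2" using assms by (intro power_strict_mono) auto
  thus ?thesis by (simp add: power_mult_distrib)
qed

lemma powr_minus_one: "0 < (x::real) \<Longrightarrow> x powr (e - 1) = x powr e / x"
  by (simp add: powr_diff)

lemma time_profile_deriv:
  fixes a b c \<rho> s :: real
  assumes s: "s > 0" and W: "c\<^sup>2 * s\<^sup>2 - \<rho> > 0"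
  shows "((\<lambda>s. s powr (-a) * (c\<^sup>2 * s\<^sup>2 - \<rho>) powr b) has_real_derivative
     s powr (-a) * (c\<^sup>2 * s\<^sup>2 - \<rho>) powr b * (2 * b * c\<^sup>2 * s / (c\<^sup>2 * s\<^sup>2 - \<rho>) - a / s)) (at s)"
proof -
  have "((\<lambda>s. s powr (-a) * (c\<^sup>2 * s\<^sup>2 - \<rho>) powr b) has_real_derivative
     (-a) * s powr (-a-1) * (c\<^sup>2 * s\<^sup>2 - \<rho>) powr b + s powr (-a) * (b * (c\<^sup>2 * s\<^sup>2 - \<rho>) powr (b-1) * (2 * c\<^sup>2 * s))) (at s)"
    using assms by (auto intro!: derivative_eq_intros simp: algebra_simps power2_eq_square)
  moreover have "(-a) * s powr (-a-1) * (c\<^sup>2 * s\<^sup>2 - \<rho>) powr b + s powr (-a) * (b * (c\<^sup>2 * s\<^sup>2 - \<rho>) powr (b-1) * (2 * c\<^sup>2 * s))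
      = s powr (-a) * (c\<^sup>2 * s\<^sup>2 - \<rho>) powr b * (2 * b * c\<^sup>2 * s / (c\<^sup>2 * s\<^sup>2 - \<rho>) - a / s)"
    using assms by (simp add: powr_minus_one field_simps)
  ultimately show ?thesis by simp
qed

lemma time_profile_deriv2:
  fixes a b c \<rho> t :: real
  assumes t: "t > 0" and W: "c\<^sup>2 * t\<^sup>2 - \<rho> > 0"
  shows "((\<lambda>s. s powr (-a) * (c\<^sup>2 * s\<^sup>2 - \<rho>) powr b * (2 * b * c\<^sup>2 * s / (c\<^sup>2 * s\<^sup>2 - \<rho>) - a / s))
     has_real_derivative t powr (-a) * (c\<^sup>2 * t\<^sup>2 - \<rho>) powr b *
        (a * (a + 1) / t\<^sup>2 - 4 * a * b * c\<^sup>2 / (c\<^sup>2 * t\<^sup>2 - \<rho>)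
         + 4 * b * (b - 1) * c^4 * t\<^sup>2 / (c\<^sup>2 * t\<^sup>2 - \<rho>)\<^sup>2 + 2 * b * c\<^sup>2 / (c\<^sup>2 * t\<^sup>2 - \<rho>))) (at t)"
proof -
  define W where "W = c\<^sup>2 * t\<^sup>2 - \<rho>"
  have D: "((\<lambda>s. s powr (-a) * (c\<^sup>2 * s\<^sup>2 - \<rho>) powr b) has_real_derivative
     t powr (-a) * W powr b * (2 * b * c\<^sup>2 * t / W - a / t)) (at t)"
    unfolding W_def by (rule time_profile_deriv[OF assms])
  have E: "((\<lambda>s. 2 * b * c\<^sup>2 * s / (c\<^sup>2 * s\<^sup>2 - \<rho>) - a / s) has_real_derivative
      2 * b * c\<^sup>2 * (W - 2 * c\<^sup>2 * t\<^sup>2) / W\<^sup>2 + a / t\<^sup>2) (at t)"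
    using assms by (auto intro!: derivative_eq_intros simp: W_def field_simps power2_eq_square)
  have g: "(2 * b * c\<^sup>2 * t / W - a / t) * (2 * b * c\<^sup>2 * t / W - a / t)
      + (2 * b * c\<^sup>2 * (W - 2 * c\<^sup>2 * t\<^sup>2) / W\<^sup>2 + a / t\<^sup>2)
      = a * (a + 1) / t\<^sup>2 - 4 * a * b * c\<^sup>2 / W
         + 4 * b * (b - 1) * c^4 * t\<^sup>2 / W\<^sup>2 + 2 * b * c\<^sup>2 / W"
    using t W unfolding W_def[symmetric] by (simp add: field_simps) (simp add: algebra_simps eval_nat_numeral)
  show ?thesis
    unfolding W_def[symmetric] g[symmetric]
    by (rule DERIV_cong[OF DERIV_mult[OF D E]])
       (use W t in \<open>simp add: W_def[symmetric], simp add: field_simps\<close>)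
qed

text \<open>Along the line x + v e_j one has |x + v e_j|^2 = |x|^2 + 2 v x_j + v^2, so the space profile
  is (W - (2 v \<xi> + v^2))^b with W = c^2 t^2 - |x|^2 and \<xi> = x_j.\<close>
lemma space_profile_deriv:
  fixes b W \<xi> v :: real
  assumes "W - (2 * v * \<xi> + v\<^sup>2) > 0"
  shows "((\<lambda>v. (W - (2 * v * \<xi> + v\<^sup>2)) powr b) has_real_derivative
     (W - (2 * v * \<xi> + v\<^sup>2)) powr b * (- b * (2 * \<xi> + 2 * v) / (W - (2 * v * \<xi> + v\<^sup>2)))) (at v)"
proof -
  have "((\<lambda>v. (W - (2 * v * \<xi> + v\<^sup>2)) powr b) has_real_derivative
     b * (W - (2 * v * \<xi> + v\<^sup>2)) powr (b-1) * (-(2 * \<xi> + 2 * v))) (at v)"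
    using assms by (auto intro!: derivative_eq_intros simp: algebra_simps power2_eq_square)
  moreover have "b * (W - (2 * v * \<xi> + v\<^sup>2)) powr (b-1) * (-(2 * \<xi> + 2 * v))
      = (W - (2 * v * \<xi> + v\<^sup>2)) powr b * (- b * (2 * \<xi> + 2 * v) / (W - (2 * v * \<xi> + v\<^sup>2)))"
    using assms by (simp add: powr_minus_one field_simps)
  ultimately show ?thesis by simp
qed

lemma space_profile_deriv2:
  fixes b W \<xi> :: real
  assumes W: "W > 0"
  shows "((\<lambda>v. (W - (2 * v * \<xi> + v\<^sup>2)) powr b * (- b * (2 * \<xi> + 2 * v) / (W - (2 * v * \<xi> + v\<^sup>2))))
     has_real_derivative W powr b * (4 * b * (b - 1) * \<xi>\<^sup>2 / W\<^sup>2 - 2 * b / W)) (at 0)"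
proof -
  have D: "((\<lambda>v. (W - (2 * v * \<xi> + v\<^sup>2)) powr b) has_real_derivative W powr b * (- b * (2 * \<xi>) / W)) (at 0)"
    using space_profile_deriv[of W 0 \<xi> b] W by simp
  have E: "((\<lambda>v. - b * (2 * \<xi> + 2 * v) / (W - (2 * v * \<xi> + v\<^sup>2))) has_real_derivative
      - b * (2 * W + 4 * \<xi>\<^sup>2) / W\<^sup>2) (at 0)"
    using W by (auto intro!: derivative_eq_intros simp: field_simps power2_eq_square)
  have g: "(- b * (2 * \<xi>) / W) * (- b * (2 * \<xi>) / W) + (- b * (2 * W + 4 * \<xi>\<^sup>2) / W\<^sup>2)
      = 4 * b * (b - 1) * \<xi>\<^sup>2 / W\<^sup>2 - 2 * b / W"
    using W by (simp add: field_simps) (simp add: algebra_simps eval_nat_numeral)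
  show ?thesis
    unfolding g[symmetric]
    by (rule DERIV_cong[OF DERIV_mult[OF D E]]) (use W in \<open>simp add: field_simps\<close>)
qed

lemma epd_density_time_profile:
  fixes x :: "real ^ 'n" and c \<gamma> s :: real
  assumes c: "c > 0" and s: "s > 0" and xs: "norm x < c * s"
  defines "a \<equiv> real CARD('n) - 2 + 2 * \<gamma>"
  shows "epd_density c \<gamma> x s
       = epd_const (real CARD('n)) \<gamma> * c powr (-a) * (s powr (-a) * (c\<^sup>2 * s\<^sup>2 - (norm x)\<^sup>2) powr (\<gamma> - 1))"
  using epd_density_cone[OF s xs, where \<gamma>=\<gamma>] c s
  unfolding a_def[symmetric] by (simp add: powr_mult powr_minus field_simps)

lemma epd_time_derivatives:
  fixes x :: "real ^ 'n" and c \<gamma> t :: real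
  assumes c: "c > 0" and t: "t > 0" and xt: "norm x < c * t"
  defines "p \<equiv> \<lambda>s. epd_density c \<gamma> x s"
    and "a \<equiv> real CARD('n) - 2 + 2 * \<gamma>" and "b \<equiv> \<gamma> - 1" and "W \<equiv> c\<^sup>2 * t\<^sup>2 - (norm x)\<^sup>2"
  shows "p differentiable (at t)" "deriv p differentiable (at t)"
    and "deriv p t = p t * (2 * b * c\<^sup>2 * t / W - a / t)"
    and "deriv (deriv p) t = p t * (a * (a + 1) / t\<^sup>2 - 4 * a * b * c\<^sup>2 / W
                                   + 4 * b * (b - 1) * c^4 * t\<^sup>2 / W\<^sup>2 + 2 * b * c\<^sup>2 / W)"
proof -
  define \<rho> where "\<rho> = (norm x)\<^sup>2"
  define \<kappa> where "\<kappa> = epd_const (real CARD('n)) \<gamma> * c powr (-a)"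
  define h where "h s = s powr (-a) * (c\<^sup>2 * s\<^sup>2 - \<rho>) powr b" for s
  define h1 where "h1 s = h s * (2 * b * c\<^sup>2 * s / (c\<^sup>2 * s\<^sup>2 - \<rho>) - a / s)" for s
  define S where "S = {norm x / c <..}"
  have S: "open S" "t \<in> S" using xt c by (auto simp: S_def field_simps)
  have cone: "s > 0" "norm x < c * s" "c\<^sup>2 * s\<^sup>2 - \<rho> > 0" if "s \<in> S" for s
  proof -
    show s: "norm x < c * s" using that c by (simp add: S_def field_simps)
    thus "s > 0" using c by (smt (verit) norm_ge_zero zero_less_mult_pos)
    show "c\<^sup>2 * s\<^sup>2 - \<rho> > 0" using cone_gap_pos[OF s] by (simp add: \<rho>_def)
  qed
  have p_eq: "p s = \<kappa> * h s" if "s \<in> S" for s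
    using epd_density_time_profile[OF c cone(1,2)[OF that], where \<gamma>=\<gamma>]
    by (simp add: p_def \<kappa>_def h_def a_def b_def \<rho>_def)
  have D1: "\<forall>s\<in>S. (p has_real_derivative \<kappa> * h1 s) (at s)"
  proof
    fix s assume s: "s \<in> S"
    show "(p has_real_derivative \<kappa> * h1 s) (at s)"
      unfolding h1_def h_def
      by (rule has_field_derivative_transform_within_open[OF DERIV_cmult[OF
          time_profile_deriv[where a=a and b=b, OF cone(1,3)[OF s]]] S(1) s])
         (simp add: p_eq h_def)
  qed
  have D2: "((\<lambda>s. \<kappa> * h1 s) has_real_derivative \<kappa> * h t * (a * (a + 1) / t\<^sup>2 - 4 * a * b * c\<^sup>2 / W
                                   + 4 * b * (b - 1) * c^4 * t\<^sup>2 / W\<^sup>2 + 2 * b * c\<^sup>2 / W)) (at t)"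
    using DERIV_cmult[OF time_profile_deriv2[where a=a and b=b, OF t cone(3)[OF S(2)]], of \<kappa>]
    by (simp add: h_def h1_def W_def \<rho>_def mult.assoc)
  note L = deriv2_from_local_derivative[OF S D1 D2]
  show "p differentiable (at t)" "deriv p differentiable (at t)" using L(1,3) .
  show "deriv p t = p t * (2 * b * c\<^sup>2 * t / W - a / t)"
    using L(2) p_eq[OF S(2)] by (simp add: h1_def W_def \<rho>_def mult.assoc)
  show "deriv (deriv p) t = p t * (a * (a + 1) / t\<^sup>2 - 4 * a * b * c\<^sup>2 / W
                                   + 4 * b * (b - 1) * c^4 * t\<^sup>2 / W\<^sup>2 + 2 * b * c\<^sup>2 / W)"
    using L(4) p_eq[OF S(2)] by simp
qed

lemma norm_add_axis_sq:
  fixes x :: "real ^ 'n"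
  shows "(norm (x + v *\<^sub>R axis j 1))\<^sup>2 = (norm x)\<^sup>2 + (2 * v * x $ j + v\<^sup>2)"
  by (simp only: power2_norm_eq_inner)
     (simp add: inner_add_left inner_add_right inner_axis inner_axis' inner_axis_axis
        inner_commute algebra_simps power2_eq_square)

lemma sum_components_sq:
  fixes x :: "real ^ 'n"
  shows "(\<Sum>j\<in>UNIV. (x $ j)\<^sup>2) = (norm x)\<^sup>2"
  by (simp only: power2_norm_eq_inner) (simp add: inner_vec_def power2_eq_square)

lemma epd_space_derivatives:
  fixes x :: "real ^ 'n" and c \<gamma> t :: real and j :: 'n
  assumes t: "t > 0" and xt: "norm x < c * t"
  defines "q \<equiv> \<lambda>v. epd_density c \<gamma> (x + v *\<^sub>R axis j 1) t"
    and "b \<equiv> \<gamma> - 1" and "W \<equiv> c\<^sup>2 * t\<^sup>2 - (norm x)\<^sup>2"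
  shows "q differentiable (at 0)" "deriv q differentiable (at 0)"
    and "deriv (deriv q) 0 = epd_density c \<gamma> x t * (4 * b * (b - 1) * (x $ j)\<^sup>2 / W\<^sup>2 - 2 * b / W)"
proof -
  define \<kappa> where "\<kappa> = epd_const (real CARD('n)) \<gamma> * (1 / (c * t) powr (real CARD('n) - 2 + 2 * \<gamma>))"
  define g where "g v = (W - (2 * v * x $ j + v\<^sup>2)) powr b * (- b * (2 * x $ j + 2 * v) / (W - (2 * v * x $ j + v\<^sup>2)))" for v
  define S where "S = {v. norm (x + v *\<^sub>R axis j (1::real)) < c * t}"
  have S: "open S" "0 \<in> S" unfolding S_def using xt
    by (auto intro!: open_Collect_less continuous_intros)
  have q_eq: "q v = \<kappa> * (W - (2 * v * x $ j + v\<^sup>2)) powr b" if "v \<in> S" for v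
    using epd_density_cone[OF t, of "x + v *\<^sub>R axis j 1" c \<gamma>] that
    by (simp add: q_def S_def \<kappa>_def b_def W_def norm_add_axis_sq algebra_simps)
  have W: "W > 0" using cone_gap_pos[OF xt] by (simp add: W_def)
  have D1: "\<forall>v\<in>S. (q has_real_derivative \<kappa> * g v) (at v)"
  proof
    fix v assume v: "v \<in> S"
    have "c\<^sup>2 * t\<^sup>2 - (norm (x + v *\<^sub>R axis j (1::real)))\<^sup>2 > 0"
      using v by (intro cone_gap_pos) (simp add: S_def)
    hence inside: "W - (2 * v * x $ j + v\<^sup>2) > 0"
      unfolding norm_add_axis_sq by (simp add: W_def)
    show "(q has_real_derivative \<kappa> * g v) (at v)"
      unfolding g_def
      by (rule has_field_derivative_transform_within_open[OF DERIV_cmult[OF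
            space_profile_deriv[where b=b, OF inside]] S(1) v])
         (simp add: q_eq)
  qed
  have D2: "((\<lambda>v. \<kappa> * g v) has_real_derivative
      \<kappa> * W powr b * (4 * b * (b - 1) * (x $ j)\<^sup>2 / W\<^sup>2 - 2 * b / W)) (at 0)"
    using DERIV_cmult[OF space_profile_deriv2[where b=b and \<xi>="x $ j", OF W], of \<kappa>]
    by (simp add: g_def mult.assoc)
  note L = deriv2_from_local_derivative[OF S D1 D2]
  show "q differentiable (at 0)" "deriv q differentiable (at 0)" using L(1,3) .
  show "deriv (deriv q) 0 = epd_density c \<gamma> x t * (4 * b * (b - 1) * (x $ j)\<^sup>2 / W\<^sup>2 - 2 * b / W)"
    using L(4) q_eq[OF S(2)] by (simp add: q_def)
qed

lemma epd_laplacian: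
  fixes x :: "real ^ 'n" and c \<gamma> t :: real
  assumes t: "t > 0" and xt: "norm x < c * t"
  defines "b \<equiv> \<gamma> - 1" and "W \<equiv> c\<^sup>2 * t\<^sup>2 - (norm x)\<^sup>2"
  shows "(\<Sum>j\<in>UNIV. deriv (\<lambda>u. deriv (\<lambda>v. epd_density c \<gamma> (x + v *\<^sub>R axis j 1) t) u) 0)
       = epd_density c \<gamma> x t * (4 * b * (b - 1) * (norm x)\<^sup>2 / W\<^sup>2 - 2 * real CARD('n) * b / W)"
proof -
  define P where "P = epd_density c \<gamma> x t"
  have "(\<Sum>j\<in>UNIV. deriv (\<lambda>u. deriv (\<lambda>v. epd_density c \<gamma> (x + v *\<^sub>R axis j 1) t) u) 0)
      = (\<Sum>j\<in>UNIV. P * (4 * b * (b - 1) * (x $ j)\<^sup>2 / W\<^sup>2 - 2 * b / W))"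
    using epd_space_derivatives(3)[OF t xt, where \<gamma>=\<gamma>] by (simp add: P_def b_def W_def)
  also have "\<dots> = P * ((\<Sum>j\<in>UNIV. 4 * b * (b - 1) * (x $ j)\<^sup>2 / W\<^sup>2) - (\<Sum>j\<in>(UNIV :: 'n set). 2 * b / W))"
    by (simp add: sum_distrib_left[symmetric] sum_subtractf)
  also have "\<dots> = P * (4 * b * (b - 1) * (\<Sum>j\<in>UNIV. (x $ j)\<^sup>2) / W\<^sup>2 - real CARD('n) * (2 * b / W))"
    by (simp add: sum_divide_distrib[symmetric] sum_distrib_left[symmetric])
  finally show ?thesis by (simp add: sum_components_sq P_def algebra_simps)
qed

text \<open>After dividing by p, the equation is an identity of rational functions; it holds precisely
  because a = d + 2b, i.e. d-2+2\<gamma> = d + 2(\<gamma>-1).\<close>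
lemma epd_symbol_identity:
  fixes a b c d t \<rho> P :: real
  assumes t: "t > 0" and W: "c\<^sup>2 * t\<^sup>2 - \<rho> > 0" and a: "a = d + 2 * b"
  defines "W \<equiv> c\<^sup>2 * t\<^sup>2 - \<rho>"
  shows "P * (a * (a + 1) / t\<^sup>2 - 4 * a * b * c\<^sup>2 / W + 4 * b * (b - 1) * c^4 * t\<^sup>2 / W\<^sup>2 + 2 * b * c\<^sup>2 / W)
         + (a + 1) / t * (P * (2 * b * c\<^sup>2 * t / W - a / t))
       = c\<^sup>2 * (P * (4 * b * (b - 1) * \<rho> / W\<^sup>2 - 2 * d * b / W))"
proof -
  have \<rho>: "\<rho> = c\<^sup>2 * t\<^sup>2 - W" by (simp add: W_def)
  have "W > 0" using W by (simp add: W_def)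
  thus ?thesis using t unfolding a \<rho>
    by (simp add: field_simps) (simp add: algebra_simps eval_nat_numeral)
qed

theorem theorem4p1:
  fixes c \<gamma> :: real
  assumes "c > 0" and "\<gamma> > 0"
  defines "p \<equiv> epd_density c \<gamma> :: real ^ 'n \<Rightarrow> real \<Rightarrow> real"
  shows "(\<forall>t>0. (\<forall>x\<in>ball 0 (c * t). p x t \<ge> 0)
                 \<and> ((\<lambda>x. p x t) has_integral 1) (ball 0 (c * t)))
       \<and> (\<forall>x t. t > 0 \<and> norm x < c * t \<longrightarrow>
            (\<lambda>s. p x s) differentiable (at t)
          \<and> (\<lambda>s. deriv (\<lambda>r. p x r) s) differentiable (at t)
          \<and> (\<forall>j. (\<lambda>v. p (x + v *\<^sub>R axis j 1) t) differentiable (at 0)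
                \<and> (\<lambda>u. deriv (\<lambda>v. p (x + v *\<^sub>R axis j 1) t) u) differentiable (at 0))
          \<and> deriv (\<lambda>s. deriv (\<lambda>r. p x r) s) t
              + (real CARD('n) + 2 * \<gamma> - 1) / t * deriv (\<lambda>s. p x s) t
            = c\<^sup>2 * (\<Sum>j\<in>UNIV. deriv (\<lambda>u. deriv (\<lambda>v. p (x + v *\<^sub>R axis j 1) t) u) 0))"
proof -
  have density: "\<forall>t>0. (\<forall>x\<in>ball 0 (c * t). p x t \<ge> 0) \<and> ((\<lambda>x. p x t) has_integral 1) (ball 0 (c * t))"
    by (simp add: p_def epd_density_nonneg[OF \<open>\<gamma> > 0\<close>] epd_density_integral[OF \<open>c > 0\<close> \<open>\<gamma> > 0\<close>])
  have pde: "(\<lambda>s. p x s) differentiable (at t)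
          \<and> (\<lambda>s. deriv (\<lambda>r. p x r) s) differentiable (at t)
          \<and> (\<forall>j. (\<lambda>v. p (x + v *\<^sub>R axis j 1) t) differentiable (at 0)
                \<and> (\<lambda>u. deriv (\<lambda>v. p (x + v *\<^sub>R axis j 1) t) u) differentiable (at 0))
          \<and> deriv (\<lambda>s. deriv (\<lambda>r. p x r) s) t
              + (real CARD('n) + 2 * \<gamma> - 1) / t * deriv (\<lambda>s. p x s) t
            = c\<^sup>2 * (\<Sum>j\<in>UNIV. deriv (\<lambda>u. deriv (\<lambda>v. p (x + v *\<^sub>R axis j 1) t) u) 0)"
    if t: "t > 0" and xt: "norm x < c * t" for x t
  proof -
    note time = epd_time_derivatives[OF \<open>c > 0\<close> t xt, where \<gamma>=\<gamma>]
    note space = epd_space_derivatives[OF t xt, where \<gamma>=\<gamma>]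
    have coeff: "real CARD('n) + 2 * \<gamma> - 1 = (real CARD('n) - 2 + 2 * \<gamma>) + 1" by simp
    have "deriv (\<lambda>s. deriv (\<lambda>r. p x r) s) t + (real CARD('n) + 2 * \<gamma> - 1) / t * deriv (\<lambda>s. p x s) t
        = c\<^sup>2 * (\<Sum>j\<in>UNIV. deriv (\<lambda>u. deriv (\<lambda>v. p (x + v *\<^sub>R axis j 1) t) u) 0)"
      unfolding p_def coeff time(3,4) epd_laplacian[OF t xt]
      by (rule epd_symbol_identity[OF t cone_gap_pos[OF xt]]) simp
    thus ?thesis using time(1,2) space(1,2) by (simp add: p_def)
  qed
  show ?thesis using density pde by blast
qed

end
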